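(* Let $n_0\in C^1(\Omega,\mathbb S^2)$ with $n_0\ne-e_3$, and suppose $n_0$ is conformal. Let $\rho_0=-B_0^{-1}b_0$ with $B_0,b_0$ as in the context. Then $\rho_0\cdot e_1=\rho_0\cdot e_2=0$ (so $R_{n_0}V_{\rho_0}R_{n_0}^t$ is a multiple of $n_0\otimes n_0-\frac13I$, i.e. no biaxiality at this order), and $$\int_\Omega\tfrac12B_0\rho_0\cdot\rho_0+b_0\cdot\rho_0=-\frac{3s_+^2}{\nu}\int_\Omega|\nabla n_0|^4.$$
   Context: $a,b,c>0$, $s_+=\frac{b^2+\sqrt{b^4+24a^2c^2}}{4c^2}$, $\mu=b^2s_+$, $\nu=\frac13b^2s_++2a^2$, $B_0=\mathrm{diag}(\mu,\mu,\nu)$. $F_1=\frac1{\sqrt2}(e_1\otimes e_1-e_2\otimes e_2)$, $F_2=\frac1{\sqrt2}(e_1\otimes e_2+e_2\otimes e_1)$, $F_3=\sqrt{\frac32}(e_3\otimes e_3-\frac13I)$; $V_\rho=\sum_{j=1}^3\rho_jF_j$. For $n\ne-e_3$, $R_n=I+[e_3\times n]_\times+\frac{[e_3\times n]_\times^2}{1+n\cdot e_3}$ with $[\omega]_\times v=\omega\times v$. $\nabla n\otimes\nabla n=\sum_{i=1}^2\partial_in\otimes\partial_in$, and $b_0\cdot e_j=-2s_+(\nabla n_0\otimes\nabla n_0):(R_{n_0}F_jR_{n_0}^t)$ for $j=1,2$, $b_0\cdot e_3=\sqrt6\,s_+|\nabla n_0|^2$, with $A:B=\mathrm{tr}(A^tB)$.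 $n$ is conformal if $\partial_2n=\sigma\,n\times\partial_1n$ with $\sigma\equiv\pm1$ constant; $\Omega\subset\mathbb R^2$ bounded and $|\nabla n_0|\in L^4(\Omega)$. *)

theory Defs
  imports "HOL-Analysis.Analysis" "HOL-Analysis.Cross3"
begin

unbundle no cross3_syntax

definition ev3 :: "3 \<Rightarrow> real^3" where "ev3 j = axis j 1"

definition tens :: "real^3 \<Rightarrow> real^3 \<Rightarrow> real^3^3" where
  "tens u v = (\<chi> i j. u$i * v$j)"

definition frob :: "real^3^3 \<Rightarrow> real^3^3 \<Rightarrow> real" where
  "frob A B = trace (transpose A ** B)"

definition minv :: "real^3^3 \<Rightarrow> real^3^3" where
  "minv A = (SOME B. A ** B = mat 1 \<and> B ** A = mat 1)"

definition Fm :: "3 \<Rightarrow> real^3^3" where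
  "Fm j = (if j = 1 then (1 / sqrt 2) *\<^sub>R (tens (ev3 1) (ev3 1) - tens (ev3 2) (ev3 2))
           else if j = 2 then (1 / sqrt 2) *\<^sub>R (tens (ev3 1) (ev3 2) + tens (ev3 2) (ev3 1))
           else sqrt (3/2) *\<^sub>R (tens (ev3 3) (ev3 3) - (1/3) *\<^sub>R mat 1))"

definition Vrho :: "real^3 \<Rightarrow> real^3^3" where
  "Vrho \<rho> = (\<Sum>j\<in>UNIV. (\<rho>$j) *\<^sub>R Fm j)"

definition skew :: "real^3 \<Rightarrow> real^3^3" where
  "skew w = (\<chi> i j. (cross3 w (axis j 1))$i)"

definition Rn :: "real^3 \<Rightarrow> real^3^3" where
  "Rn n = mat 1 + skew (cross3 (ev3 3) n)
          + (1 / (1 + n \<bullet> ev3 3)) *\<^sub>R (skew (cross3 (ev3 3) n) ** skew (cross3 (ev3 3) n))"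

definition pd :: "(real^2 \<Rightarrow> real^3) \<Rightarrow> 2 \<Rightarrow> real^2 \<Rightarrow> real^3" where
  "pd n i x = frechet_derivative n (at x) (axis i 1)"

definition gradtens :: "(real^2 \<Rightarrow> real^3) \<Rightarrow> real^2 \<Rightarrow> real^3^3" where
  "gradtens n x = (\<Sum>i\<in>UNIV. tens (pd n i x) (pd n i x))"

definition gradsq :: "(real^2 \<Rightarrow> real^3) \<Rightarrow> real^2 \<Rightarrow> real" where
  "gradsq n x = (\<Sum>i\<in>UNIV. (norm (pd n i x))\<^sup>2)"

definition splus :: "real \<Rightarrow> real \<Rightarrow> real \<Rightarrow> real" where
  "splus a b c = (b^2 + sqrt (b^4 + 24 * a^2 * c^2)) / (4 * c^2)"

definition muc :: "real \<Rightarrow> real \<Rightarrow> real \<Rightarrow> real" where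
  "muc a b c = b^2 * splus a b c"

definition nuc :: "real \<Rightarrow> real \<Rightarrow> real \<Rightarrow> real" where
  "nuc a b c = (1/3) * b^2 * splus a b c + 2 * a^2"

definition B0 :: "real \<Rightarrow> real \<Rightarrow> real \<Rightarrow> real^3^3" where
  "B0 a b c = (\<chi> i j. if i = j then (if i = 3 then nuc a b c else muc a b c) else 0)"

definition b0 :: "real \<Rightarrow> real \<Rightarrow> real \<Rightarrow> (real^2 \<Rightarrow> real^3) \<Rightarrow> real^2 \<Rightarrow> real^3" where
  "b0 a b c n x = (\<chi> j. if j = 3 then sqrt 6 * splus a b c * gradsq n x
      else - 2 * splus a b c * frob (gradtens n x) (Rn (n x) ** Fm j ** transpose (Rn (n x))))"

definition rho0 :: "real \<Rightarrow> real \<Rightarrow> real \<Rightarrow> (real^2 \<Rightarrow> real^3) \<Rightarrow> real^2 \<Rightarrow> real^3" where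
  "rho0 a b c n x = - (minv (B0 a b c) *v b0 a b c n x)"

definition conformal :: "(real^2 \<Rightarrow> real^3) \<Rightarrow> (real^2) set \<Rightarrow> bool" where
  "conformal n \<Omega> \<longleftrightarrow> (\<exists>\<sigma>::real. (\<sigma> = 1 \<or> \<sigma> = -1) \<and>
      (\<forall>x\<in>\<Omega>. pd n 2 x = \<sigma> *\<^sub>R cross3 (n x) (pd n 1 x)))"

end

theory Submission
  imports Defs
begin

text \<open>Conformality makes \<open>\<partial>\<^sub>1n\<^sub>0\<close> and \<open>\<partial>\<^sub>2n\<^sub>0 = \<plusminus>n\<^sub>0 \<times> \<partial>\<^sub>1n\<^sub>0\<close> an orthogonal
  pair of equal length in the tangent plane \<open>n\<^sub>0\<^sup>\<perp>\<close>, so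
  \<open>\<nabla>n\<^sub>0 \<otimes> \<nabla>n\<^sub>0 = |\<partial>\<^sub>1n\<^sub>0|\<^sup>2 (I - n\<^sub>0 \<otimes> n\<^sub>0)\<close>. As \<open>R\<^sub>n\<close> is a rotation taking
  \<open>e\<^sub>3\<close> to \<open>n\<close>, conjugating by it turns the pairing with \<open>R\<^sub>n F\<^sub>j R\<^sub>n\<^sup>t\<close> into
  \<open>(I - e\<^sub>3 \<otimes> e\<^sub>3) : F\<^sub>j\<close>, which vanishes for \<open>j = 1, 2\<close>. Hence \<open>b\<^sub>0\<close>, and with it
  \<open>\<rho>\<^sub>0 = -B\<^sub>0\<^sup>-\<^sup>1 b\<^sub>0\<close> for the diagonal \<open>B\<^sub>0\<close>, points along \<open>e\<^sub>3\<close>, and the energy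
  density is pointwise \<open>-(b\<^sub>0\<cdot>e\<^sub>3)\<^sup>2/(2\<nu>) = -3 s\<^sub>+\<^sup>2 |\<nabla>n\<^sub>0|\<^sup>4/\<nu>\<close>.\<close>

lemma frob_conj:
  fixes A F R :: "real^3^3"
  shows "frob A (R ** F ** transpose R) = frob (transpose R ** A ** R) F"
  unfolding frob_def matrix_transpose_mul transpose_transpose
  by (metis matrix_mul_assoc trace_mul_sym)

lemma transpose_mult_tens_mult:
  fixes R :: "real^3^3"
  shows "transpose R ** tens u v ** R = tens (transpose R *v u) (transpose R *v v)"
  by (simp add: vec_eq_iff tens_def matrix_matrix_mult_def matrix_vector_mult_def transpose_def
      sum_distrib_left sum_distrib_right algebra_simps)

lemma Rn_entries:
  "Rn n = (let k = 1 / (1 + n$3) in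
     (\<chi> i j. if i = 1 then (if j = 1 then 1 - n$1*n$1*k else if j = 2 then -n$1*n$2*k else n$1)
      else if i = 2 then (if j = 1 then -n$1*n$2*k else if j = 2 then 1 - n$2*n$2*k else n$2)
      else (if j = 1 then -n$1 else if j = 2 then -n$2 else 1 - (n$1*n$1+n$2*n$2)*k)))"
  unfolding Rn_def Let_def
  by (simp add: vec_eq_iff forall_3 ev3_def skew_def cross3_def matrix_matrix_mult_def sum_3 axis_def
      mat_def inner_vec_def algebra_simps)

lemma Rn_ev3_orthogonal:
  fixes n :: "real^3"
  assumes "norm n = 1" "n \<noteq> - ev3 3"
  shows Rn_mult_ev3: "Rn n *v ev3 3 = n" and orthogonal_Rn: "transpose (Rn n) ** Rn n = mat 1"
proof -
  obtain x y z where n: "n$1 = x" "n$2 = y" "n$3 = z" by blast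
  have sq: "x*x+y*y+z*z = 1" using assms(1) n by (simp add: norm_eq_1 inner_vec_def sum_3)
  have nz: "1 + z \<noteq> 0"
  proof
    assume "1 + z = 0"
    then have "z = -1" by simp
    with sq have "x * x + y * y = 0" by simp
    with \<open>z = -1\<close> have "x = 0" "y = 0" "z = -1" by (auto simp: sum_squares_eq_zero_iff)
    with n assms(2) show False by (simp add: vec_eq_iff forall_3 ev3_def axis_def)
  qed
  define k where "k = 1 / (1 + z)"
  have k: "k * (1 + z) = 1" using nz by (simp add: k_def)
  show "Rn n *v ev3 3 = n"
    unfolding Rn_entries Let_def n k_def[symmetric]
    apply (simp add: vec_eq_iff forall_3 matrix_vector_mult_def sum_3 ev3_def axis_def n)
    using sq k by algebra
  show "transpose (Rn n) ** Rn n = mat 1"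
    unfolding Rn_entries Let_def n k_def[symmetric]
    apply (simp add: vec_eq_iff forall_3 matrix_matrix_mult_def transpose_def sum_3 mat_def n)
    using sq k by algebra
qed

lemma matrix_diff_ldistrib: "A ** (B - C) = A ** B - A ** (C :: 'a::ring_1^'n^'m)"
  by (simp add: vec_eq_iff matrix_matrix_mult_def sum_subtractf right_diff_distrib)

lemma matrix_diff_rdistrib: "(B - C) ** A = B ** A - C ** (A :: 'a::ring_1^'n^'m)"
  by (simp add: vec_eq_iff matrix_matrix_mult_def sum_subtractf left_diff_distrib)

lemma Rn_conj_projector:
  fixes n :: "real^3"
  assumes "norm n = 1" "n \<noteq> - ev3 3"
  shows "transpose (Rn n) ** (mat 1 - tens n n) ** Rn n = mat 1 - tens (ev3 3) (ev3 3)"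
proof -
  have "transpose (Rn n) *v n = ev3 3"
    by (metis Rn_ev3_orthogonal[OF assms] matrix_vector_mul_assoc matrix_vector_mul_lid)
  then show ?thesis
    using orthogonal_Rn[OF assms]
    by (simp add: matrix_diff_ldistrib matrix_diff_rdistrib transpose_mult_tens_mult)
qed

lemma frob_projector_Fm:
  assumes "j \<noteq> 3"
  shows "frob (mat 1 - tens (ev3 3) (ev3 3)) (Fm j) = 0"
  using assms exhaust_3[of j]
  by (auto simp: Fm_def frob_def trace_def transpose_def matrix_matrix_mult_def tens_def ev3_def
      mat_def axis_def sum_3)

lemma frob_projector_Rn_Fm:
  fixes n :: "real^3"
  assumes "norm n = 1" "n \<noteq> - ev3 3" "j \<noteq> 3"
  shows "frob (mat 1 - tens n n) (Rn n ** Fm j ** transpose (Rn n)) = 0"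
  by (simp add: frob_conj Rn_conj_projector[OF assms(1,2)] frob_projector_Fm[OF assms(3)])

lemma frob_scaleR_left: "frob (r *\<^sub>R A) B = r * frob A B"
  by (simp add: frob_def trace_def transpose_def matrix_matrix_mult_def sum_distrib_left
      mult.assoc)

lemma tens_add_tens_cross3:
  fixes n p :: "real^3"
  assumes "n \<bullet> n = 1" "n \<bullet> p = 0"
  shows "tens p p + tens (cross3 n p) (cross3 n p) = (p \<bullet> p) *\<^sub>R (mat 1 - tens n n)"
proof -
  obtain x y z p1 p2 p3 where n: "n$1 = x" "n$2 = y" "n$3 = z" "p$1 = p1" "p$2 = p2" "p$3 = p3"
    by blast
  have "x * x + y * y + z * z = 1" "x * p1 + y * p2 + z * p3 = 0"
    using assms n by (auto simp: inner_vec_def sum_3)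
  then show ?thesis
    by (simp add: vec_eq_iff forall_3 tens_def cross3_def inner_vec_def sum_3 mat_def n) algebra
qed

lemma unit_field_derivative_orthogonal:
  fixes n :: "'a::real_normed_vector \<Rightarrow> 'b::real_inner"
  assumes "open S" "x \<in> S" "\<forall>y\<in>S. norm (n y) = 1" "n differentiable (at x)"
  shows "n x \<bullet> frechet_derivative n (at x) h = 0"
proof -
  let ?D = "frechet_derivative n (at x)"
  have "(n has_derivative ?D) (at x)"
    using assms(4) frechet_derivative_works by blast
  then have "((\<lambda>y. n y \<bullet> n y) has_derivative (\<lambda>h. n x \<bullet> ?D h + ?D h \<bullet> n x)) (at x)"
    by (intro has_derivative_inner)
  moreover have "\<And>y. y \<in> S \<Longrightarrow> n y \<bullet> n y = 1"
    using assms(3) by (simp add: norm_eq_1)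
  ultimately have "((\<lambda>y. 1) has_derivative (\<lambda>h. n x \<bullet> ?D h + ?D h \<bullet> n x)) (at x)"
    using has_derivative_transform_within_open assms(1,2) by force
  then have "(\<lambda>h. n x \<bullet> ?D h + ?D h \<bullet> n x) = (\<lambda>h. 0)"
    using has_derivative_const has_derivative_unique by blast
  then show ?thesis
    by (metis inner_commute mult_2 mult_eq_0_iff zero_neq_numeral)
qed

lemma gradtens_conformal:
  assumes "n x \<bullet> n x = 1" "n x \<bullet> pd n 1 x = 0"
    and "pd n 2 x = \<sigma> *\<^sub>R cross3 (n x) (pd n 1 x)" "\<sigma> = 1 \<or> \<sigma> = -1"
  shows "gradtens n x = (pd n 1 x \<bullet> pd n 1 x) *\<^sub>R (mat 1 - tens (n x) (n x))"
  using assms tens_add_tens_cross3[OF assms(1,2)]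
  by (auto simp: gradtens_def UNIV_2 tens_def vec_eq_iff)

lemma b0_in_plane_eq_0:
  fixes n0 :: "real^2 \<Rightarrow> real^3"
  assumes "open S" "x \<in> S" "\<forall>y\<in>S. norm (n0 y) = 1" "n0 differentiable (at x)"
    and "n0 x \<noteq> - ev3 3" "conformal n0 S" "j \<noteq> 3"
  shows "b0 a b c n0 x $ j = 0"
proof -
  obtain \<sigma> where \<sigma>: "\<sigma> = 1 \<or> \<sigma> = -1" "pd n0 2 x = \<sigma> *\<^sub>R cross3 (n0 x) (pd n0 1 x)"
    using assms(2,6) unfolding conformal_def by blast
  have unit: "norm (n0 x) = 1"
    using assms(2,3) by blast
  have "n0 x \<bullet> pd n0 1 x = 0"
    unfolding pd_def using unit_field_derivative_orthogonal[OF assms(1-4)] .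
  with unit \<sigma> have "gradtens n0 x = (pd n0 1 x \<bullet> pd n0 1 x) *\<^sub>R (mat 1 - tens (n0 x) (n0 x))"
    by (intro gradtens_conformal) (auto simp: norm_eq_1)
  then show ?thesis
    using frob_projector_Rn_Fm[OF unit assms(5,7)] assms(7)
    by (simp add: b0_def frob_scaleR_left)
qed

lemma splus_pos: "b > 0 \<Longrightarrow> c > 0 \<Longrightarrow> splus a b c > 0"
  unfolding splus_def by (intro divide_pos_pos add_pos_nonneg) auto

lemma muc_pos: "b > 0 \<Longrightarrow> c > 0 \<Longrightarrow> muc a b c > 0"
  unfolding muc_def using splus_pos by simp

lemma nuc_pos: "b > 0 \<Longrightarrow> c > 0 \<Longrightarrow> nuc a b c > 0"
  unfolding nuc_def using splus_pos by (intro add_pos_nonneg) auto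

lemma minv_B0:
  assumes "b > 0" "c > 0"
  shows "minv (B0 a b c) = (\<chi> i j. if i = j then (if i = 3 then 1 / nuc a b c else 1 / muc a b c) else 0)"
    (is "_ = ?D")
proof -
  have "muc a b c > 0" "nuc a b c > 0"
    using muc_pos[OF assms] nuc_pos[OF assms] by blast+
  then have right: "B0 a b c ** ?D = mat 1" and left: "?D ** B0 a b c = mat 1"
    unfolding vec_eq_iff forall_3 B0_def matrix_matrix_mult_def sum_3 mat_def by simp_all
  have "B = ?D" if "B0 a b c ** B = mat 1" for B
  proof -
    have "?D ** (B0 a b c ** B) = ?D"
      using that by simp
    then show ?thesis
      by (simp add: matrix_mul_assoc left)
  qed
  then show ?thesis
    unfolding minv_def using right left by (intro some_equality) blast+
qed

lemma rho0_eq_ev3: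
  assumes "b > 0" "c > 0" "b0 a b c n x $ 1 = 0" "b0 a b c n x $ 2 = 0"
  shows "rho0 a b c n x = (- b0 a b c n x $ 3 / nuc a b c) *\<^sub>R ev3 3"
  using assms
  by (simp add: rho0_def minv_B0 vec_eq_iff forall_3 matrix_vector_mult_def sum_3 ev3_def axis_def)

lemma energy_density_rho0:
  assumes "b > 0" "c > 0" "b0 a b c n x $ 1 = 0" "b0 a b c n x $ 2 = 0"
  shows "(1/2) * ((B0 a b c *v rho0 a b c n x) \<bullet> rho0 a b c n x) + b0 a b c n x \<bullet> rho0 a b c n x
    = - (3 * (splus a b c)^2 / nuc a b c) * (gradsq n x)\<^sup>2"
proof -
  have nu: "nuc a b c \<noteq> 0"
    using nuc_pos[OF assms(1,2)] by (metis less_irrefl)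
  have "(1/2) * ((B0 a b c *v rho0 a b c n x) \<bullet> rho0 a b c n x) + b0 a b c n x \<bullet> rho0 a b c n x
      = - ((b0 a b c n x $ 3)^2 / (2 * nuc a b c))"
    using nu by (simp add: rho0_eq_ev3[OF assms] B0_def matrix_vector_mult_def inner_vec_def sum_3
        ev3_def axis_def field_simps power2_eq_square)
  also have "\<dots> = - (3 * (splus a b c)^2 / nuc a b c) * (gradsq n x)\<^sup>2"
    using nu by (simp add: b0_def power_mult_distrib field_simps)
  finally show ?thesis .
qed

theorem mainTheorem9:
  fixes a b c :: real and \<Omega> :: "(real^2) set" and n0 :: "real^2 \<Rightarrow> real^3"
  assumes "a > 0" "b > 0" "c > 0"
    and "open \<Omega>" "bounded \<Omega>"
    and "\<forall>x\<in>\<Omega>. n0 differentiable (at x)"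
    and "\<forall>i. continuous_on \<Omega> (pd n0 i)"
    and "\<forall>x\<in>\<Omega>. norm (n0 x) = 1"
    and "\<forall>x\<in>\<Omega>. n0 x \<noteq> - ev3 3"
    and "conformal n0 \<Omega>"
    and "set_integrable lebesgue \<Omega> (\<lambda>x. (gradsq n0 x)\<^sup>2)"
  shows "(\<forall>x\<in>\<Omega>. rho0 a b c n0 x \<bullet> ev3 1 = 0 \<and> rho0 a b c n0 x \<bullet> ev3 2 = 0)
    \<and> (LINT x:\<Omega>|lebesgue. (1/2) * ((B0 a b c *v rho0 a b c n0 x) \<bullet> rho0 a b c n0 x)
                             + b0 a b c n0 x \<bullet> rho0 a b c n0 x)
      = - (3 * (splus a b c)^2 / nuc a b c) * (LINT x:\<Omega>|lebesgue. (gradsq n0 x)\<^sup>2)"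
proof -
  have b0_12: "b0 a b c n0 x $ 1 = 0" "b0 a b c n0 x $ 2 = 0" if "x \<in> \<Omega>" for x
    using b0_in_plane_eq_0[OF assms(4) that assms(8)] assms(6,9,10) that by auto
  have on_axis: "rho0 a b c n0 x \<bullet> ev3 1 = 0 \<and> rho0 a b c n0 x \<bullet> ev3 2 = 0" if "x \<in> \<Omega>" for x
    using rho0_eq_ev3[OF assms(2,3) b0_12[OF that]] by (simp add: ev3_def inner_axis_axis)
  have "(LINT x:\<Omega>|lebesgue. (1/2) * ((B0 a b c *v rho0 a b c n0 x) \<bullet> rho0 a b c n0 x)
                             + b0 a b c n0 x \<bullet> rho0 a b c n0 x)
      = (LINT x:\<Omega>|lebesgue. - (3 * (splus a b c)^2 / nuc a b c) * (gradsq n0 x)\<^sup>2)"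
    using assms(4) energy_density_rho0[OF assms(2,3) b0_12]
    by (intro set_lebesgue_integral_cong) auto
  also have "\<dots> = - (3 * (splus a b c)^2 / nuc a b c) * (LINT x:\<Omega>|lebesgue. (gradsq n0 x)\<^sup>2)"
    by (rule set_integral_mult_right)
  finally show ?thesis
    using on_axis by blast
qed

end
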